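(* For every $d\ge1$ there exists a function $\eta\in\mathcal A_+(d)$ such that $\widehat\eta=\eta$, $\eta(0)<0$, and $|x|^{d+1}\eta(x)\ge 1$ for all sufficiently large $|x|$.
   Context: Fourier transform: $\widehat f(\xi)=\int_{\mathbb{R}^d} f(x)e^{-2\pi i\langle x,\xi\rangle}\,dx$. $\mathcal A_+(d)$ is the set of $f:\mathbb{R}^d\to\mathbb{R}$ with $f,\widehat f\in L^1(\mathbb{R}^d)$, $\widehat f$ real-valued, $f$ eventually nonnegative (i.e. $\ge 0$ for all sufficiently large $|x|$) with $\widehat f(0)\le0$, and $\widehat f$ eventually nonnegative with $f(0)\le0$. *)

theory Defs
  imports "HOL-Analysis.Analysis"
begin

definition fourier :: "('a::euclidean_space \<Rightarrow> real) \<Rightarrow> 'a \<Rightarrow> complex" where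
  "fourier f \<xi> = (\<integral>x. complex_of_real (f x) * cis (- 2 * pi * (x \<bullet> \<xi>)) \<partial>lborel)"

definition eventually_nonneg :: "('a::euclidean_space \<Rightarrow> real) \<Rightarrow> bool" where
  "eventually_nonneg g \<longleftrightarrow> (\<exists>R. \<forall>x. R \<le> norm x \<longrightarrow> 0 \<le> g x)"

text \<open>The class A_+(d), with d = DIM('a). Since hat f is required to be real-valued,
  we identify it with the real function Re (hat f).\<close>
definition A_plus :: "('a::euclidean_space \<Rightarrow> real) set" where
  "A_plus = {f. integrable lborel f
               \<and> (\<forall>\<xi>. Im (fourier f \<xi>) = 0)
               \<and> integrable lborel (\<lambda>\<xi>. Re (fourier f \<xi>))
               \<and> eventually_nonneg f \<and> Re (fourier f 0) \<le> 0
               \<and> eventually_nonneg (\<lambda>\<xi>. Re (fourier f \<xi>)) \<and> f 0 \<le> 0}"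

end

theory Submission
  imports Defs "HOL-Probability.Characteristic_Functions" "HOL-Real_Asymp.Real_Asymp"
begin

text \<open>The Gaussian \<open>g\<^sub>s(x) = exp (-\<pi> |x|^2 / s^2)\<close> on \<open>\<real>^d\<close> has Fourier transform
  \<open>s^d g\<^bsub>1/s\<^esub>\<close>, so \<open>Q\<^sub>s = g\<^sub>s + s^d g\<^bsub>1/s\<^esub>\<close> is its own Fourier transform, and so is the
  nonnegative series \<open>S = \<Sum>\<^sub>k Q\<^bsub>s\<^sub>k\<^esub> / s\<^sub>k^(d+1)\<close> with \<open>s\<^sub>k = 2^(k+1)\<close>. On the dyadic shell
  \<open>2^k \<le> |x| < 2^(k+1)\<close> the \<open>k\<close>-th term alone is at least \<open>e^-\<pi> (2|x|)^-(d+1)\<close>, so \<open>S\<close>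
  decays no faster than \<open>|x|^-(d+1)\<close>. Subtracting a large multiple of the rapidly decaying
  self-dual function \<open>Q\<^sub>1 = 2 exp (-\<pi> |x|^2)\<close> from a large multiple of \<open>S\<close> makes the value
  at the origin negative without affecting this tail.\<close>

lemma
  fixes \<theta> :: real
  shows integrable_std_gaussian_cis:
      "integrable lborel (\<lambda>x. complex_of_real (exp (- (x^2) / 2)) * cis (\<theta> * x))"
    and integral_std_gaussian_cis:
      "(\<integral>x. complex_of_real (exp (- (x^2) / 2)) * cis (\<theta> * x) \<partial>lborel)
         = complex_of_real (sqrt (2 * pi) * exp (- (\<theta>^2) / 2))"
proof -
  have eq: "complex_of_real (exp (- (x^2) / 2)) * cis (\<theta> * x)
      = complex_of_real (sqrt (2 * pi)) * (std_normal_density x *\<^sub>R iexp (\<theta> * x))" for x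
    by (simp add: std_normal_density_def cis_conv_exp scaleR_conv_of_real mult.commute)
  have "(\<lambda>x. std_normal_density x *\<^sub>R iexp (\<theta> * x)) \<in> borel_measurable lborel"
    by measurable
  then have "integrable lborel (\<lambda>x. std_normal_density x *\<^sub>R iexp (\<theta> * x))"
    by (rule Bochner_Integration.integrable_bound[where f = std_normal_density, rotated])
       (auto simp: norm_exp_eq_Re)
  then show "integrable lborel (\<lambda>x. complex_of_real (exp (- (x^2) / 2)) * cis (\<theta> * x))"
    unfolding eq by (rule integrable_mult_right)
  have "(\<integral>x. std_normal_density x *\<^sub>R iexp (\<theta> * x) \<partial>lborel) = char std_normal_distribution \<theta>"
    unfolding char_def by (subst integral_density) auto
  also have "\<dots> = complex_of_real (exp (- (\<theta>^2) / 2))"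
    by (simp add: char_std_normal_distribution)
  finally show "(\<integral>x. complex_of_real (exp (- (x^2) / 2)) * cis (\<theta> * x) \<partial>lborel)
         = complex_of_real (sqrt (2 * pi) * exp (- (\<theta>^2) / 2))"
    unfolding eq integral_mult_right_zero by simp
qed

lemma
  fixes s u :: real
  assumes s: "0 < s"
  shows integrable_gaussian_cis:
      "integrable lborel (\<lambda>y. complex_of_real (exp (- pi * y^2 / s^2)) * cis (- 2 * pi * y * u))"
    and integral_gaussian_cis:
      "(\<integral>y. complex_of_real (exp (- pi * y^2 / s^2)) * cis (- 2 * pi * y * u) \<partial>lborel)
         = complex_of_real (s * exp (- pi * s^2 * u^2))"
proof -
  define c where "c = s / sqrt (2 * pi)"
  define \<theta> where "\<theta> = - 2 * pi * c * u"
  define f where "f = (\<lambda>y. complex_of_real (exp (- pi * y^2 / s^2)) * cis (- 2 * pi * y * u))"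
  have c: "0 < c" "c \<noteq> 0" using s by (auto simp: c_def)
  have c2: "c^2 = s^2 / (2 * pi)" by (simp add: c_def power_divide)
  have f_scaled: "f (0 + c * x) = complex_of_real (exp (- (x^2) / 2)) * cis (\<theta> * x)" for x
  proof -
    have "- pi * (c * x)^2 / s^2 = - (x^2) / 2"
      using s by (simp add: power_mult_distrib c2 field_simps)
    then show ?thesis by (simp add: f_def \<theta>_def mult_ac)
  qed
  have "integrable lborel f"
    using lborel_integrable_real_affine_iff[OF c(2), of f 0] integrable_std_gaussian_cis[of \<theta>]
    by (simp only: f_scaled)
  then show "integrable lborel (\<lambda>y. complex_of_real (exp (- pi * y^2 / s^2)) * cis (- 2 * pi * y * u))"
    by (simp add: f_def)
  have "integral\<^sup>L lborel f = \<bar>c\<bar> *\<^sub>R (\<integral>x. f (0 + c * x) \<partial>lborel)"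
    by (rule lborel_integral_real_affine[OF c(2)])
  also have "\<dots> = c *\<^sub>R complex_of_real (sqrt (2 * pi) * exp (- (\<theta>^2) / 2))"
    using c by (simp only: f_scaled integral_std_gaussian_cis) simp
  also have "\<dots> = complex_of_real (s * exp (- pi * s^2 * u^2))"
  proof -
    have "- (\<theta>^2) / 2 = - pi * s^2 * u^2"
      by (simp add: \<theta>_def power_mult_distrib c2) (simp add: power2_eq_square field_simps)
    moreover have "c * sqrt (2 * pi) = s" by (simp add: c_def)
    ultimately show ?thesis by (simp add: scaleR_conv_of_real mult.assoc[symmetric] flip: of_real_mult)
  qed
  finally show "(\<integral>y. complex_of_real (exp (- pi * y^2 / s^2)) * cis (- 2 * pi * y * u) \<partial>lborel)
         = complex_of_real (s * exp (- pi * s^2 * u^2))"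
    by (simp add: f_def)
qed

lemma
  fixes f :: "'a::euclidean_space \<Rightarrow> real \<Rightarrow> 'b::{real_normed_field, banach, second_countable_topology}"
  assumes f: "\<And>b. b \<in> Basis \<Longrightarrow> integrable lborel (f b)"
  shows integrable_lborel_prod_Basis: "integrable lborel (\<lambda>x::'a. \<Prod>b\<in>Basis. f b (x \<bullet> b))"
    and integral_lborel_prod_Basis:
      "(\<integral>x. (\<Prod>b\<in>Basis. f b (x \<bullet> b)) \<partial>(lborel :: 'a measure)) = (\<Prod>b\<in>Basis. integral\<^sup>L lborel (f b))"
proof -
  interpret product_sigma_finite "\<lambda>_::'a. lborel :: real measure" by standard
  have [measurable]: "f b \<in> borel_measurable borel" if "b \<in> Basis" for b
    using borel_measurable_integrable[OF f[OF that]] by simp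
  have F: "(\<lambda>x::'a. \<Prod>b\<in>Basis. f b (x \<bullet> b)) \<in> borel_measurable borel"
    by measurable
  have coords: "(\<lambda>g. \<Sum>b\<in>Basis. g b *\<^sub>R b) \<in> measurable (\<Pi>\<^sub>M b\<in>Basis. lborel) (borel :: 'a measure)"
    by measurable
  have comp: "(\<Prod>b\<in>Basis. f b ((\<Sum>b'\<in>Basis. g b' *\<^sub>R b') \<bullet> b)) = (\<Prod>b\<in>Basis. f b (g b))" for g
    by (intro prod.cong refl) (simp add: inner_sum_left inner_Basis if_distrib cong: if_cong)
  have "integrable (\<Pi>\<^sub>M b\<in>Basis. lborel) (\<lambda>g. \<Prod>b\<in>Basis. f b (g b))"
    using f by (intro product_integrable_prod) auto
  then show "integrable lborel (\<lambda>x::'a. \<Prod>b\<in>Basis. f b (x \<bullet> b))"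
    by (subst lborel_eq, subst integrable_distr_eq[OF coords F]) (simp add: comp)
  have "(\<integral>x. (\<Prod>b\<in>Basis. f b (x \<bullet> b)) \<partial>(lborel :: 'a measure))
      = (\<integral>g. (\<Prod>b\<in>Basis. f b (g b)) \<partial>(\<Pi>\<^sub>M b\<in>Basis. lborel))"
    by (subst lborel_eq, subst integral_distr[OF coords F]) (simp add: comp)
  also have "\<dots> = (\<Prod>b\<in>Basis. integral\<^sup>L lborel (f b))"
    using f by (intro product_integral_prod) auto
  finally show "(\<integral>x. (\<Prod>b\<in>Basis. f b (x \<bullet> b)) \<partial>(lborel :: 'a measure)) = (\<Prod>b\<in>Basis. integral\<^sup>L lborel (f b))" .
qed

lemma prod_of_real_exp_mult_cis:
  assumes "finite I"
  shows "(\<Prod>i\<in>I. complex_of_real (exp (a i)) * cis (t i))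
       = complex_of_real (exp (\<Sum>i\<in>I. a i)) * cis (\<Sum>i\<in>I. t i)"
  using assms by (induction I rule: finite_induct) (simp_all add: exp_add mult_ac flip: cis_mult)

lemma norm_power2_eq_sum_Basis: "norm x ^ 2 = (\<Sum>b\<in>Basis. (x \<bullet> b) ^ 2)"
  by (subst power2_norm_eq_inner, subst euclidean_inner) (simp add: power2_eq_square)

definition gaussian :: "real \<Rightarrow> 'a::euclidean_space \<Rightarrow> real" where
  "gaussian s x = exp (- pi * norm x ^ 2 / s ^ 2)"

lemma
  fixes \<xi> :: "'a::euclidean_space"
  assumes s: "0 < s"
  shows integrable_gaussian: "integrable lborel (gaussian s :: 'a \<Rightarrow> real)"
    and fourier_gaussian: "fourier (gaussian s) \<xi> = complex_of_real (s ^ DIM('a) * gaussian (1 / s) \<xi>)"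
proof -
  define h where "h b y = complex_of_real (exp (- pi * y^2 / s^2)) * cis (- 2 * pi * y * (\<xi> \<bullet> b))"
    for b :: 'a and y
  have integrand: "complex_of_real (gaussian s x) * cis (- 2 * pi * (x \<bullet> \<xi>)) = (\<Prod>b\<in>Basis. h b (x \<bullet> b))"
    for x :: 'a
  proof -
    have "(\<Sum>b\<in>Basis. - pi * (x \<bullet> b)^2 / s^2) = - pi * norm x ^ 2 / s^2"
      by (simp add: norm_power2_eq_sum_Basis sum_divide_distrib sum_distrib_left)
    moreover have "(\<Sum>b\<in>Basis. - 2 * pi * (x \<bullet> b) * (\<xi> \<bullet> b)) = - 2 * pi * (x \<bullet> \<xi>)"
      by (simp add: euclidean_inner[of x \<xi>] sum_distrib_left mult.assoc)
    ultimately show ?thesis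
      unfolding h_def gaussian_def by (simp add: prod_of_real_exp_mult_cis)
  qed
  have h: "integrable lborel (h b)" "integral\<^sup>L lborel (h b) = complex_of_real (s * exp (- pi * s^2 * (\<xi> \<bullet> b)^2))"
    for b
    unfolding h_def using integrable_gaussian_cis integral_gaussian_cis s by auto
  have "integrable lborel (\<lambda>x::'a. complex_of_real (gaussian s x) * cis (- 2 * pi * (x \<bullet> \<xi>)))"
    unfolding integrand using h by (intro integrable_lborel_prod_Basis)
  from integrable_norm[OF this] show "integrable lborel (gaussian s :: 'a \<Rightarrow> real)"
    by (simp add: norm_mult gaussian_def[abs_def])
  have "fourier (gaussian s) \<xi> = (\<Prod>b\<in>Basis. complex_of_real (s * exp (- pi * s^2 * (\<xi> \<bullet> b)^2)))"
    unfolding fourier_def integrand using h by (simp add: integral_lborel_prod_Basis)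
  also have "\<dots> = complex_of_real (s ^ DIM('a) * exp (\<Sum>b\<in>Basis. - pi * s^2 * (\<xi> \<bullet> b)^2))"
    by (simp add: prod.distrib exp_sum)
  also have "\<dots> = complex_of_real (s ^ DIM('a) * gaussian (1 / s) \<xi>)"
    by (simp add: gaussian_def norm_power2_eq_sum_Basis sum_distrib_left sum_distrib_right
        power_one_over mult_ac)
  finally show "fourier (gaussian s) \<xi> = complex_of_real (s ^ DIM('a) * gaussian (1 / s) \<xi>)" .
qed

lemma integrable_fourier_integrand:
  fixes f :: "'a::euclidean_space \<Rightarrow> real"
  assumes f: "integrable lborel f"
  shows "integrable lborel (\<lambda>x. complex_of_real (f x) * cis (- 2 * pi * (x \<bullet> \<xi>)))"
proof (rule Bochner_Integration.integrable_bound[OF f])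
  have [measurable]: "f \<in> borel_measurable borel" using f by auto
  have [measurable]: "(\<lambda>x. cis (- 2 * pi * (x \<bullet> \<xi>))) \<in> borel_measurable borel"
    by (intro borel_measurable_continuous_onI continuous_intros)
  show "(\<lambda>x. complex_of_real (f x) * cis (- 2 * pi * (x \<bullet> \<xi>))) \<in> borel_measurable lborel"
    by measurable
qed (simp add: norm_mult)

lemma fourier_lincomb:
  fixes f g :: "'a::euclidean_space \<Rightarrow> real"
  assumes f: "integrable lborel f" and g: "integrable lborel g"
  shows "fourier (\<lambda>x. a * f x + b * g x) \<xi> = a * fourier f \<xi> + b * fourier g \<xi>"
proof -
  have "complex_of_real (a * f x + b * g x) * cis (- 2 * pi * (x \<bullet> \<xi>))
      = a * (complex_of_real (f x) * cis (- 2 * pi * (x \<bullet> \<xi>)))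
        + b * (complex_of_real (g x) * cis (- 2 * pi * (x \<bullet> \<xi>)))" for x
    by (simp add: algebra_simps)
  then show ?thesis
    unfolding fourier_def
    using integrable_fourier_integrand[OF f] integrable_fourier_integrand[OF g] by simp
qed

lemma fourier_at_0: "fourier f 0 = complex_of_real (integral\<^sup>L lborel f)"
  by (simp add: fourier_def)

definition self_dual :: "('a::euclidean_space \<Rightarrow> real) \<Rightarrow> bool" where
  "self_dual f \<longleftrightarrow> integrable lborel f \<and> (\<forall>\<xi>. fourier f \<xi> = complex_of_real (f \<xi>))"

lemma self_dual_lincomb:
  "self_dual f \<Longrightarrow> self_dual g \<Longrightarrow> self_dual (\<lambda>x. a * f x + b * g x)"
  by (simp add: self_dual_def fourier_lincomb)

lemma self_dual_scale: "self_dual f \<Longrightarrow> self_dual (\<lambda>x. a * f x)"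
  using self_dual_lincomb[of f f a 0] by simp

lemma self_dual_integral: "self_dual f \<Longrightarrow> integral\<^sup>L lborel f = f 0"
  by (metis fourier_at_0 of_real_eq_iff self_dual_def)

lemma self_dual_nonneg_le_at_0:
  assumes f: "self_dual f" and nonneg: "\<And>x. 0 \<le> f x"
  shows "f \<xi> \<le> f 0"
proof -
  have "f \<xi> = norm (fourier f \<xi>)"
    using f nonneg by (simp add: self_dual_def)
  also have "\<dots> \<le> (\<integral>x. norm (complex_of_real (f x) * cis (- 2 * pi * (x \<bullet> \<xi>))) \<partial>lborel)"
    unfolding fourier_def by (rule integral_norm_bound)
  also have "\<dots> = integral\<^sup>L lborel f"
    using nonneg by (simp add: norm_mult)
  finally show ?thesis
    using self_dual_integral[OF f] by simp
qed

lemma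
  fixes f :: "nat \<Rightarrow> 'a::euclidean_space \<Rightarrow> real"
  assumes f: "\<And>k. self_dual (f k)" and nonneg: "\<And>k x. 0 \<le> f k x"
    and summable: "summable (\<lambda>k. f k 0)"
  shows summable_self_dual: "summable (\<lambda>k. f k x)"
    and self_dual_suminf: "self_dual (\<lambda>x. \<Sum>k. f k x)"
proof -
  show pointwise: "summable (\<lambda>k. f k x)" for x
    by (rule summable_comparison_test'[OF summable, where N = 0])
       (simp add: nonneg self_dual_nonneg_le_at_0[OF f nonneg])
  have integrable: "integrable lborel (f k)" for k
    using f by (simp add: self_dual_def)
  have integrals: "summable (\<lambda>k. \<integral>x. norm (f k x) \<partial>lborel)"
    using summable nonneg self_dual_integral[OF f] by simp
  have "integrable lborel (\<lambda>x. \<Sum>k. f k x)"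
    using integrable pointwise integrals nonneg by (intro integrable_suminf) simp_all
  moreover have "fourier (\<lambda>x. \<Sum>k. f k x) \<xi> = complex_of_real (\<Sum>k. f k \<xi>)" for \<xi>
  proof -
    define g where "g = (\<lambda>k x. complex_of_real (f k x) * cis (- 2 * pi * (x \<bullet> \<xi>)))"
    have norm_g: "norm (g k x) = f k x" for k x
      using nonneg by (simp add: g_def norm_mult)
    have "fourier (\<lambda>x. \<Sum>k. f k x) \<xi> = (\<integral>x. (\<Sum>k. g k x) \<partial>lborel)"
      unfolding fourier_def g_def using pointwise
      by (simp add: suminf_of_real summable_of_real flip: suminf_mult2)
    also have "\<dots> = (\<Sum>k. integral\<^sup>L lborel (g k))"
      using integrable_fourier_integrand[OF integrable] pointwise integrals nonneg
      by (intro integral_suminf) (simp_all add: norm_g, simp add: g_def)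
    also have "\<dots> = (\<Sum>k. complex_of_real (f k \<xi>))"
    proof -
      have "integral\<^sup>L lborel (g k) = complex_of_real (f k \<xi>)" for k
        using f[of k] unfolding self_dual_def fourier_def g_def by simp
      then show ?thesis by simp
    qed
    finally show ?thesis
      using pointwise by (simp add: suminf_of_real)
  qed
  ultimately show "self_dual (\<lambda>x. \<Sum>k. f k x)"
    by (simp add: self_dual_def)
qed

definition sym_gaussian :: "real \<Rightarrow> 'a::euclidean_space \<Rightarrow> real" where
  "sym_gaussian s x = gaussian s x + s ^ DIM('a) * gaussian (1 / s) x"

lemma self_dual_sym_gaussian:
  assumes s: "0 < s"
  shows "self_dual (sym_gaussian s :: 'a::euclidean_space \<Rightarrow> real)"
proof -
  have s': "0 < 1 / s" using s by simp
  have "sym_gaussian s = (\<lambda>x::'a. 1 * gaussian s x + s ^ DIM('a) * gaussian (1 / s) x)"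
    by (simp add: sym_gaussian_def[abs_def])
  moreover have "fourier (\<lambda>x::'a. 1 * gaussian s x + s ^ DIM('a) * gaussian (1 / s) x) \<xi>
      = complex_of_real (sym_gaussian s \<xi>)" for \<xi>
    using fourier_lincomb[OF integrable_gaussian[OF s] integrable_gaussian[OF s'], of 1 "s ^ DIM('a)" \<xi>] s
    by (simp add: fourier_gaussian[OF s] fourier_gaussian[OF s'] sym_gaussian_def power_one_over
        field_simps)
  ultimately show ?thesis
    by (simp add: self_dual_def integrable_gaussian[OF s] integrable_gaussian[OF s'])
qed

lemma sym_gaussian_nonneg: "0 \<le> s \<Longrightarrow> 0 \<le> sym_gaussian s x"
  by (simp add: sym_gaussian_def gaussian_def add_nonneg_nonneg)

lemma sym_gaussian_at_0: "sym_gaussian s (0::'a::euclidean_space) = 1 + s ^ DIM('a)"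
  by (simp add: sym_gaussian_def gaussian_def)

lemma gaussian_le_sym_gaussian: "0 \<le> s \<Longrightarrow> gaussian s x \<le> sym_gaussian s x"
  by (simp add: sym_gaussian_def gaussian_def)

definition gaussian_mixture :: "'a::euclidean_space \<Rightarrow> real" where
  "gaussian_mixture x = (\<Sum>k. sym_gaussian (2 ^ Suc k) x / (2 ^ Suc k) ^ (DIM('a) + 1))"

lemma
  fixes x :: "'a::euclidean_space"
  shows summable_gaussian_mixture:
      "summable (\<lambda>k. sym_gaussian (2 ^ Suc k) x / (2 ^ Suc k) ^ (DIM('a) + 1))"
    and self_dual_gaussian_mixture: "self_dual (gaussian_mixture :: 'a \<Rightarrow> real)"
proof -
  define f where "f k x = sym_gaussian (2 ^ Suc k) x / (2 ^ Suc k) ^ (DIM('a) + 1)" for k and x :: 'a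
  have self_dual: "self_dual (f k)" for k
    using self_dual_scale[OF self_dual_sym_gaussian, of "2 ^ Suc k" "1 / (2 ^ Suc k) ^ (DIM('a) + 1)"]
    by (simp add: f_def[abs_def])
  have nonneg: "0 \<le> f k x" for k x
    by (simp add: f_def sym_gaussian_nonneg)
  have "f k 0 \<le> (1 / 2) ^ k" for k
  proof -
    define s :: real where "s = 2 ^ Suc k"
    have "1 \<le> s" unfolding s_def by (rule one_le_power) simp
    then have "1 \<le> s ^ DIM('a)" by (rule one_le_power)
    have "f k 0 = (1 + s ^ DIM('a)) / s ^ (DIM('a) + 1)"
      by (simp add: f_def sym_gaussian_at_0 s_def)
    also have "\<dots> \<le> (s ^ DIM('a) + s ^ DIM('a)) / s ^ (DIM('a) + 1)"
      using \<open>1 \<le> s\<close> \<open>1 \<le> s ^ DIM('a)\<close> by (intro divide_right_mono) auto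
    also have "\<dots> = 2 / s"
      using \<open>1 \<le> s\<close> by (simp add: field_simps)
    also have "\<dots> = (1 / 2) ^ k"
      by (simp add: s_def power_one_over)
    finally show ?thesis .
  qed
  then have "summable (\<lambda>k. f k 0)"
    by (intro summable_comparison_test'[OF summable_geometric[of "1 / 2 :: real"], where N = 0]) (simp_all add: nonneg)
  from summable_self_dual[OF self_dual nonneg this] self_dual_suminf[OF self_dual nonneg this]
  show "summable (\<lambda>k. sym_gaussian (2 ^ Suc k) x / (2 ^ Suc k) ^ (DIM('a) + 1))"
    and "self_dual (gaussian_mixture :: 'a \<Rightarrow> real)"
    by (simp_all add: f_def gaussian_mixture_def[abs_def])
qed

lemma gaussian_mixture_nonneg: "0 \<le> gaussian_mixture x"
  unfolding gaussian_mixture_def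
  by (intro suminf_nonneg summable_gaussian_mixture divide_nonneg_nonneg sym_gaussian_nonneg) simp_all

lemma dyadic_bracket:
  fixes r :: real
  assumes "1 \<le> r"
  shows "\<exists>k. 2 ^ k \<le> r \<and> r < 2 ^ Suc k"
proof -
  have "0 \<le> \<lfloor>r\<rfloor>" using assms by simp
  obtain k where "2 ^ k \<le> nat \<lfloor>r\<rfloor>" "nat \<lfloor>r\<rfloor> < 2 ^ Suc k"
    using ex_power_ivl1[of 2 "nat \<lfloor>r\<rfloor>"] assms by (auto simp: le_nat_iff)
  then have "2 ^ k \<le> \<lfloor>r\<rfloor>" "\<lfloor>r\<rfloor> < 2 ^ Suc k"
    using \<open>0 \<le> \<lfloor>r\<rfloor>\<close> by (simp_all add: le_nat_iff nat_less_iff)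
  then show ?thesis
    by (auto simp: le_floor_iff floor_less_iff)
qed

lemma gaussian_mixture_lower_bound:
  fixes x :: "'a::euclidean_space"
  assumes x: "1 \<le> norm x"
  shows "exp (- pi) / 2 ^ (DIM('a) + 1) \<le> norm x ^ (DIM('a) + 1) * gaussian_mixture x"
proof -
  define n where "n = DIM('a) + 1"
  obtain k where k: "2 ^ k \<le> norm x" "norm x < 2 ^ Suc k"
    using dyadic_bracket[OF x] by blast
  define s :: real where "s = 2 ^ Suc k"
  have s: "0 < s" "norm x \<le> s" "s \<le> 2 * norm x"
    using k by (auto simp: s_def)
  have "exp (- pi) \<le> gaussian s x"
  proof -
    have "norm x ^ 2 / s ^ 2 \<le> 1"
      using s by (simp add: power_mono)
    then have "pi * (norm x ^ 2 / s ^ 2) \<le> pi"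
      using pi_ge_zero by (rule mult_left_le)
    then show ?thesis
      by (simp add: gaussian_def)
  qed
  also have "\<dots> \<le> sym_gaussian s x"
    using s by (simp add: gaussian_le_sym_gaussian)
  finally have "exp (- pi) / s ^ n \<le> sym_gaussian s x / s ^ n"
    using s by (simp add: divide_right_mono)
  also have "\<dots> \<le> gaussian_mixture x"
    unfolding gaussian_mixture_def s_def n_def
    using sum_le_suminf[OF summable_gaussian_mixture, of "{k}"]
    by (simp add: sym_gaussian_nonneg)
  finally have "norm x ^ n * (exp (- pi) / s ^ n) \<le> norm x ^ n * gaussian_mixture x"
    by (rule mult_left_mono) simp
  moreover have "exp (- pi) / 2 ^ n \<le> norm x ^ n * (exp (- pi) / s ^ n)"
  proof -
    have "s ^ n \<le> (2 * norm x) ^ n"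
      using s by (intro power_mono) simp_all
    then show ?thesis
      using s by (simp add: power_mult_distrib field_simps)
  qed
  ultimately show ?thesis
    by (simp add: n_def)
qed

lemma eventually_one_le_power_mult_diff:
  fixes S :: "'a::real_normed_vector \<Rightarrow> real"
  assumes \<delta>: "0 < \<delta>" and lower: "\<And>x. R \<le> norm x \<Longrightarrow> \<delta> \<le> norm x ^ n * S x"
    and decay: "((\<lambda>r. r ^ n * g r) \<longlongrightarrow> 0) at_top"
  shows "\<exists>R'. \<forall>x. R' \<le> norm x \<longrightarrow> 1 \<le> norm x ^ n * (2 / \<delta> * S x - c * g (norm x))"
proof -
  have "((\<lambda>r. c * (r ^ n * g r)) \<longlongrightarrow> 0) at_top"
    using tendsto_mult_right_zero[OF decay] .
  from order_tendstoD(2)[OF this, of 1]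
  obtain N where N: "\<And>r. N \<le> r \<Longrightarrow> c * (r ^ n * g r) < 1"
    by (auto simp: eventually_at_top_linorder)
  have "1 \<le> norm x ^ n * (2 / \<delta> * S x - c * g (norm x))" if "max R N \<le> norm x" for x
  proof -
    have "2 \<le> 2 / \<delta> * (norm x ^ n * S x)"
      using lower[of x] that \<delta> by (simp add: field_simps)
    moreover have "c * (norm x ^ n * g (norm x)) < 1"
      using N that by simp
    ultimately show ?thesis
      by (simp add: algebra_simps)
  qed
  then show ?thesis by blast
qed

lemma eventually_nonneg_if_tail_bound:
  assumes "\<forall>x. R \<le> norm x \<longrightarrow> 1 \<le> norm x ^ n * f x"
  shows "eventually_nonneg f"
  unfolding eventually_nonneg_def
proof (intro exI allI impI)
  fix x :: 'a
  assume "R \<le> norm x"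
  with assms have "0 < norm x ^ n * f x" by fastforce
  then show "0 \<le> f x"
    using mult_nonneg_nonpos[of "norm x ^ n" "f x"] by force
qed

lemma self_dual_in_A_plus:
  assumes "self_dual f" "eventually_nonneg f" "f 0 \<le> 0"
  shows "f \<in> A_plus"
  using assms by (simp add: A_plus_def self_dual_def)

theorem lemma3:
  shows "\<exists>\<eta>::'a::euclidean_space \<Rightarrow> real.
           \<eta> \<in> A_plus
         \<and> (\<forall>\<xi>. fourier \<eta> \<xi> = complex_of_real (\<eta> \<xi>))
         \<and> \<eta> 0 < 0
         \<and> (\<exists>R. \<forall>x. R \<le> norm x \<longrightarrow> 1 \<le> norm x ^ (DIM('a) + 1) * \<eta> x)"
proof -
  define \<delta> :: real where "\<delta> = exp (- pi) / 2 ^ (DIM('a) + 1)"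
  define c where "c = 2 / \<delta> * gaussian_mixture (0::'a) + 1"
  define \<eta> where "\<eta> x = 2 / \<delta> * gaussian_mixture x - c * sym_gaussian 1 x" for x :: 'a
  have \<delta>: "0 < \<delta>" by (simp add: \<delta>_def)
  have self_dual: "self_dual \<eta>"
    using self_dual_lincomb[OF self_dual_gaussian_mixture self_dual_sym_gaussian, of 1 "2 / \<delta>" "- c"]
    by (simp add: \<eta>_def[abs_def])
  have "0 \<le> 2 / \<delta> * gaussian_mixture (0::'a)"
    using \<delta> gaussian_mixture_nonneg by (intro mult_nonneg_nonneg) simp_all
  then have "\<eta> 0 < 0"
    by (simp add: \<eta>_def c_def sym_gaussian_at_0)
  have sym_gaussian_1: "sym_gaussian 1 x = 2 * exp (- pi * norm x ^ 2)" for x :: 'a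
    by (simp add: sym_gaussian_def gaussian_def)
  have "((\<lambda>r. r ^ (DIM('a) + 1) * (2 * exp (- pi * r ^ 2))) \<longlongrightarrow> 0) at_top"
    by real_asymp
  from eventually_one_le_power_mult_diff[where R = 1 and c = c,
      OF \<delta> gaussian_mixture_lower_bound[where 'a = 'a, folded \<delta>_def] this]
  obtain R where tail: "\<forall>x. R \<le> norm x \<longrightarrow> 1 \<le> norm x ^ (DIM('a) + 1) * \<eta> x"
    unfolding \<eta>_def sym_gaussian_1 by blast
  have "\<eta> \<in> A_plus"
    using self_dual \<open>\<eta> 0 < 0\<close>
    by (intro self_dual_in_A_plus eventually_nonneg_if_tail_bound[OF tail]) simp_all
  with self_dual \<open>\<eta> 0 < 0\<close> tail show ?thesis
    unfolding self_dual_def by blast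
qed

end
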